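(* In the storage model of the context, suppose the linear system \[ \sum_{j=1}^{\kappa_i}\alpha_{ij}=\lambda_i\ (i=1,\dots,\mathcal K),\qquad \sum_{i=1}^{\mathcal K}\sum_{j=1}^{\kappa_i}\alpha_{ij}\,\delta_{\ell,s^i_j}=\tfrac1n\ (\ell=1,\dots,n) \] has a positive solution $(\alpha_{ij})$, let $0<\varepsilon<\min_{i,j}\alpha_{ij}$, and let the embedded load chain $X^e(m)$ be constructed using the $\varepsilon$-PSERP. Then for every $x\in\mathbb N^n$, \[ \mathbf E[f(X^e(m+1))-f(X^e(m))\mid X^e(m)=x]=-2\varepsilon\sum_{i=1}^{\mathcal K}\bigl(x_{s^i_{j_{\max}}(x)}-x_{s^i_{j_{\min}}(x)}\bigr)+1-\frac1n, \] where $f(y)=\sum_{l=1}^n\bigl(y_l-\frac1n\sum_{k=1}^ny_k\bigr)^2$.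
   Context: Storage model: $n$ nodes, non-empty neighborhoods $S_1,\dots,S_{\mathcal K}\subset\{1,\dots,n\}$ covering $\{1,\dots,n\}$, $\kappa_i=|S_i|$, $S_i=\{s^i_1,\dots,s^i_{\kappa_i}\}$ a fixed enumeration. Items arrive at $S_i$ as independent Poisson processes with rates $\lambda_i>0$, $\sum_i\lambda_i=1$; each item is stored at one node of its neighborhood according to the routing policy, independently across arrivals. $X^e(m)\in\mathbb N^n$ is the vector of node loads after the $m$-th arrival. For $x\in\mathbb N^n$, $s^i_{j_{\min}}(x)$ is the first node of $S_i$ (in the enumeration) at which $x$ is minimal over $S_i$, and $s^i_{j_{\max}}(x)$ is the last node of $S_i$ at which $x$ is maximal over $S_i$. $\varepsilon$-PSERP: an item arriving at $S_i$ when the configuration is $x$ is sent to $s^i_j$ with probability $(\alpha_{ij}+\varepsilon)/\lambda_i$ if $s^i_j=s^i_{j_{\min}}(x)$, $(\alpha_{ij}-\varepsilon)/\lambda_i$ if $s^i_j=s^i_{j_{\max}}(x)$, and $\alpha_{ij}/\lambda_i$ otherwise; if $\kappa_i=1$ the item goes to the unique node of $S_i$. $\delta_{\ell,m}$ is the Kronecker delta. *)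

theory Defs
  imports "HOL-Probability.Probability"
begin

text \<open>Nodes are 0..n-1; neighbourhoods are indexed by i < K; the fixed enumeration
  of S_i is the distinct list S i (positions j < length (S i)). Loads are x :: nat => nat
  (only the coordinates l < n are relevant).\<close>

definition jmin :: "(nat \<Rightarrow> nat list) \<Rightarrow> (nat \<Rightarrow> nat) \<Rightarrow> nat \<Rightarrow> nat" where
  "jmin S x i = (LEAST j. j < length (S i) \<and> x (S i ! j) = Min (x ` set (S i)))"

definition jmax :: "(nat \<Rightarrow> nat list) \<Rightarrow> (nat \<Rightarrow> nat) \<Rightarrow> nat \<Rightarrow> nat" where
  "jmax S x i = (GREATEST j. j < length (S i) \<and> x (S i ! j) = Max (x ` set (S i)))"

definition pserp_prob ::
  "(nat \<Rightarrow> nat list) \<Rightarrow> (nat \<Rightarrow> real) \<Rightarrow> (nat \<Rightarrow> nat \<Rightarrow> real) \<Rightarrow> real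
    \<Rightarrow> (nat \<Rightarrow> nat) \<Rightarrow> nat \<Rightarrow> nat \<Rightarrow> real" where
  "pserp_prob S lam alpha eps x i j =
     (if length (S i) = 1 then 1
      else if j = jmin S x i then (alpha i j + eps) / lam i
      else if j = jmax S x i then (alpha i j - eps) / lam i
      else alpha i j / lam i)"

text \<open>Transition law of the embedded chain X^e: from configuration x, the next arrival
  is at S_i with probability lam i (= lam_i / sum of rates), and is stored at S i ! j
  with the PSERP probability; the new configuration is x with that node's load + 1.\<close>
definition pserp_step ::
  "nat \<Rightarrow> (nat \<Rightarrow> nat list) \<Rightarrow> (nat \<Rightarrow> real) \<Rightarrow> (nat \<Rightarrow> nat \<Rightarrow> real) \<Rightarrow> real
    \<Rightarrow> (nat \<Rightarrow> nat) \<Rightarrow> (nat \<Rightarrow> nat) pmf" where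
  "pserp_step K S lam alpha eps x =
     pmf_of_list (concat (map (\<lambda>i. map (\<lambda>j. (x(S i ! j := x (S i ! j) + 1),
                                           lam i * pserp_prob S lam alpha eps x i j))
                                    [0..<length (S i)]) [0..<K]))"

definition potential :: "nat \<Rightarrow> (nat \<Rightarrow> nat) \<Rightarrow> real" where
  "potential n y = (\<Sum>l<n. (real (y l) - (\<Sum>k<n. real (y k)) / real n)^2)"

end

theory Submission imports Defs begin

text \<open>Storing an item at node v raises the potential by 2 x_v + 1 - (2 \<Sigma> x + 1)/n. Under PSERP
  the routing weights are the balanced weights \<alpha>, shifted by \<plusminus>\<epsilon> at a least and a most loaded
  node of each neighbourhood. The \<alpha>-part contributes the node average of the increment,
  which is 1 - 1/n; the \<epsilon>-shift contributes 2\<epsilon>(x_min - x_max) per neighbourhood.\<close>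

lemma potential_eq_sum_squares_minus_mean:
  assumes "n > 0"
  shows "potential n y = (\<Sum>l<n. real (y l)^2) - (\<Sum>l<n. real (y l))^2 / real n"
proof -
  define T where "T = (\<Sum>k<n. real (y k))"
  have "potential n y = (\<Sum>l<n. real (y l)^2 - 2 * (T / n) * real (y l) + (T / n)^2)"
    unfolding potential_def T_def[symmetric]
    by (intro sum.cong refl) (simp add: power2_eq_square algebra_simps)
  also have "\<dots> = (\<Sum>l<n. real (y l)^2) - 2 * (T / n) * T + n * (T / n)^2"
    by (simp add: sum.distrib sum_subtractf sum_distrib_left T_def)
  also have "\<dots> = (\<Sum>l<n. real (y l)^2) - T^2 / n"
    using assms by (simp add: field_simps power2_eq_square)
  finally show ?thesis by (simp add: T_def)
qed

lemma potential_increment: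
  assumes "v < n"
  shows "potential n (y(v := y v + 1)) - potential n y
         = 2 * real (y v) + 1 - (2 * (\<Sum>l<n. real (y l)) + 1) / real n"
proof -
  have n: "n > 0" using assms by simp
  have "(\<Sum>l<n. real ((y(v := y v + 1)) l)) = (\<Sum>l<n. real (y l) + (if l = v then 1 else 0))"
    by (intro sum.cong refl) simp
  also have "\<dots> = (\<Sum>l<n. real (y l)) + 1"
    using assms by (simp add: sum.distrib)
  finally have sum_incr: "(\<Sum>l<n. real ((y(v := y v + 1)) l)) = (\<Sum>l<n. real (y l)) + 1" .
  have "(\<Sum>l<n. real ((y(v := y v + 1)) l)^2)
      = (\<Sum>l<n. real (y l)^2 + (if l = v then 2 * real (y v) + 1 else 0))"
    by (intro sum.cong refl) (simp add: power2_eq_square algebra_simps)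
  also have "\<dots> = (\<Sum>l<n. real (y l)^2) + 2 * real (y v) + 1"
    using assms by (simp add: sum.distrib)
  finally have sq_incr:
    "(\<Sum>l<n. real ((y(v := y v + 1)) l)^2) = (\<Sum>l<n. real (y l)^2) + 2 * real (y v) + 1" .
  show ?thesis
    unfolding potential_eq_sum_squares_minus_mean[OF n] sum_incr sq_incr using n
    by (simp add: field_simps power2_eq_square)
qed

lemma
  assumes "S i \<noteq> []"
  shows jmin_less_length: "jmin S x i < length (S i)"
    and jmin_is_Min: "x (S i ! jmin S x i) = Min (x ` set (S i))"
    and jmin_least: "\<And>j. j < length (S i) \<Longrightarrow> x (S i ! j) = Min (x ` set (S i)) \<Longrightarrow> jmin S x i \<le> j"
proof -
  have "Min (x ` set (S i)) \<in> x ` set (S i)" using assms by (intro Min_in) auto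
  then obtain j where "j < length (S i)" "x (S i ! j) = Min (x ` set (S i))"
    by (auto simp: in_set_conv_nth)
  then show "jmin S x i < length (S i)" "x (S i ! jmin S x i) = Min (x ` set (S i))"
    unfolding jmin_def by (metis (mono_tags, lifting) LeastI)+
  show "\<And>j. j < length (S i) \<Longrightarrow> x (S i ! j) = Min (x ` set (S i)) \<Longrightarrow> jmin S x i \<le> j"
    unfolding jmin_def by (rule Least_le) auto
qed

lemma
  assumes "S i \<noteq> []"
  shows jmax_less_length: "jmax S x i < length (S i)"
    and jmax_is_Max: "x (S i ! jmax S x i) = Max (x ` set (S i))"
    and jmax_greatest: "\<And>j. j < length (S i) \<Longrightarrow> x (S i ! j) = Max (x ` set (S i)) \<Longrightarrow> j \<le> jmax S x i"
proof -
  have "Max (x ` set (S i)) \<in> x ` set (S i)" using assms by (intro Max_in) auto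
  then obtain j where j: "j < length (S i)" "x (S i ! j) = Max (x ` set (S i))"
    by (auto simp: in_set_conv_nth)
  have bound: "\<And>y. y < length (S i) \<and> x (S i ! y) = Max (x ` set (S i)) \<Longrightarrow> y \<le> length (S i)"
    by auto
  show "jmax S x i < length (S i)" "x (S i ! jmax S x i) = Max (x ` set (S i))"
    unfolding jmax_def
    using GreatestI_nat[of "\<lambda>j. j < length (S i) \<and> x (S i ! j) = Max (x ` set (S i))", OF conjI[OF j] bound]
    by auto
  show "\<And>j. j < length (S i) \<Longrightarrow> x (S i ! j) = Max (x ` set (S i)) \<Longrightarrow> j \<le> jmax S x i"
    unfolding jmax_def by (rule Greatest_le_nat[OF _ bound]) auto
qed

text \<open>If all loads in S_i are equal, jmin is the first position and jmax the last.\<close>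
lemma jmin_neq_jmax:
  assumes "length (S i) \<ge> 2"
  shows "jmin S x i \<noteq> jmax S x i"
proof
  assume eq: "jmin S x i = jmax S x i"
  have ne: "S i \<noteq> []" using assms by auto
  let ?A = "x ` set (S i)"
  have "Min ?A = Max ?A"
    using jmin_is_Min[where S = S and i = i and x = x, OF ne]
      jmax_is_Max[where S = S and i = i and x = x, OF ne] eq
    by simp
  then have const: "\<And>j. j < length (S i) \<Longrightarrow> x (S i ! j) = Min ?A \<and> x (S i ! j) = Max ?A"
    by (metis Max_ge Min_le finite_imageI finite_set image_eqI le_antisym nth_mem)
  have "jmin S x i \<le> 0" using jmin_least[where S = S and i = i and x = x, OF ne, of 0] const[of 0] ne by simp
  moreover have "length (S i) - 1 \<le> jmax S x i"
    using jmax_greatest[where S = S and i = i and x = x, OF ne, of "length (S i) - 1"] const[of "length (S i) - 1"] ne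
    by simp
  ultimately show False using eq assms by simp
qed

lemma expectation_pmf_of_list:
  assumes wf: "pmf_of_list_wf xs"
  shows "measure_pmf.expectation (pmf_of_list xs) f = (\<Sum>(a, w) \<leftarrow> xs. w * f a)"
proof -
  let ?A = "set (map fst xs)"
  have "measure_pmf.expectation (pmf_of_list xs) f = (\<Sum>a\<in>?A. f a * pmf (pmf_of_list xs) a)"
    using set_pmf_of_list[OF wf] by (intro integral_measure_pmf_real) auto
  also have "\<dots> = (\<Sum>a\<in>?A. \<Sum>k = 0..<length xs. if fst (xs ! k) = a then snd (xs ! k) * f a else 0)"
    using wf
    by (intro sum.cong refl)
       (simp add: pmf_pmf_of_list sum_list_map_filter' sum_distrib_left
          sum_list_sum_nth[of "map _ xs"] mult.commute if_distrib cong: if_cong)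
  also have "\<dots> = (\<Sum>k = 0..<length xs. \<Sum>a\<in>?A. if fst (xs ! k) = a then snd (xs ! k) * f a else 0)"
    by (rule sum.swap)
  also have "\<dots> = (\<Sum>k = 0..<length xs. snd (xs ! k) * f (fst (xs ! k)))"
    by (intro sum.cong refl) (simp add: sum.delta)
  also have "\<dots> = (\<Sum>(a, w) \<leftarrow> xs. w * f a)"
    by (simp add: sum_list_sum_nth case_prod_beta)
  finally show ?thesis .
qed

lemma sum_list_map_concat_upt:
  "(\<Sum>z \<leftarrow> concat (map (\<lambda>i. map (F i) [0..<L i]) [0..<K]). g z)
   = (\<Sum>i<K. \<Sum>j<L i. (g (F i j) :: real))"
  by (induct K) (simp_all add: interv_sum_list_conv_sum_set_nat atLeast0LessThan)

lemma expectation_pserp_step_eq_sum: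
  assumes nonneg: "\<And>i j. i < K \<Longrightarrow> j < length (S i) \<Longrightarrow>
      0 \<le> lam i * pserp_prob S lam alpha eps x i j"
    and total: "(\<Sum>i<K. \<Sum>j<length (S i). lam i * pserp_prob S lam alpha eps x i j) = 1"
  shows "measure_pmf.expectation (pserp_step K S lam alpha eps x) f
       = (\<Sum>i<K. \<Sum>j<length (S i).
            lam i * pserp_prob S lam alpha eps x i j * f (x(S i ! j := x (S i ! j) + 1)))"
proof -
  let ?xs = "concat (map (\<lambda>i. map (\<lambda>j. (x(S i ! j := x (S i ! j) + 1),
               lam i * pserp_prob S lam alpha eps x i j)) [0..<length (S i)]) [0..<K])"
  have "pmf_of_list_wf ?xs"
  proof (rule pmf_of_list_wfI)
    show "\<And>w. w \<in> set (map snd ?xs) \<Longrightarrow> 0 \<le> w" using nonneg by auto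
    show "sum_list (map snd ?xs) = 1"
      using total by (simp add: sum_list_map_concat_upt)
  qed
  then show ?thesis
    unfolding pserp_step_def by (simp add: expectation_pmf_of_list sum_list_map_concat_upt)
qed

text \<open>For |S_i| = 1 both jmin and jmax are 0, so the \<epsilon>-terms cancel, matching the
  probability-one routing of pserp_prob.\<close>
lemma pserp_weighted_sum:
  fixes h :: "nat \<Rightarrow> real"
  assumes ne: "S i \<noteq> []" and lam: "lam i \<noteq> 0"
    and row: "(\<Sum>j<length (S i). alpha i j) = lam i"
  shows "(\<Sum>j<length (S i). lam i * pserp_prob S lam alpha eps x i j * h j)
       = (\<Sum>j<length (S i). alpha i j * h j) + eps * (h (jmin S x i) - h (jmax S x i))"
proof (cases "length (S i) = 1")
  case True
  then have "jmin S x i = 0" "jmax S x i = 0" "alpha i 0 = lam i"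
    using jmin_less_length[where S = S and i = i and x = x, OF ne]
      jmax_less_length[where S = S and i = i and x = x, OF ne] row
    by auto
  with True show ?thesis by (simp add: pserp_prob_def lessThan_Suc)
next
  case False
  with ne have "length (S i) \<ge> 2" by (cases "length (S i)") auto
  then have neq: "jmin S x i \<noteq> jmax S x i" by (rule jmin_neq_jmax)
  let ?m = "jmin S x i" and ?M = "jmax S x i"
  have "(\<Sum>j<length (S i). lam i * pserp_prob S lam alpha eps x i j * h j)
      = (\<Sum>j<length (S i). alpha i j * h j
          + ((if j = ?m then eps * h j else 0) - (if j = ?M then eps * h j else 0)))"
    using False neq lam by (intro sum.cong refl) (auto simp: pserp_prob_def field_simps)
  also have "\<dots> = (\<Sum>j<length (S i). alpha i j * h j) + eps * (h ?m - h ?M)"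
    using jmin_less_length[where S = S and i = i and x = x, OF ne]
      jmax_less_length[where S = S and i = i and x = x, OF ne]
    by (simp add: sum.distrib sum_subtractf sum.delta' algebra_simps)
  finally show ?thesis .
qed

lemma expectation_pserp_step:
  assumes S_nonempty: "\<And>i. i < K \<Longrightarrow> S i \<noteq> []"
    and lam_pos: "\<And>i. i < K \<Longrightarrow> lam i > 0"
    and lam_sum: "(\<Sum>i<K. lam i) = 1"
    and alpha_row: "\<And>i. i < K \<Longrightarrow> (\<Sum>j<length (S i). alpha i j) = lam i"
    and eps_nonneg: "0 \<le> eps"
    and eps_le: "\<And>i j. i < K \<Longrightarrow> j < length (S i) \<Longrightarrow> eps \<le> alpha i j"
  shows "measure_pmf.expectation (pserp_step K S lam alpha eps x) f
       = (\<Sum>i<K. \<Sum>j<length (S i). alpha i j * f (x(S i ! j := x (S i ! j) + 1)))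
         + eps * (\<Sum>i<K. f (x(S i ! jmin S x i := x (S i ! jmin S x i) + 1))
                         - f (x(S i ! jmax S x i := x (S i ! jmax S x i) + 1)))"
proof -
  let ?w = "\<lambda>i j. lam i * pserp_prob S lam alpha eps x i j"
  have weighted: "(\<Sum>j<length (S i). ?w i j * h j)
      = (\<Sum>j<length (S i). alpha i j * h j) + eps * (h (jmin S x i) - h (jmax S x i))"
    if "i < K" for i and h :: "nat \<Rightarrow> real"
    using that S_nonempty lam_pos[OF that] alpha_row by (intro pserp_weighted_sum) auto
  have "0 \<le> ?w i j" if "i < K" "j < length (S i)" for i j
    using lam_pos[OF that(1)] eps_le[OF that] eps_nonneg
    by (auto simp: pserp_prob_def intro!: mult_nonneg_nonneg divide_nonneg_pos)
  moreover have "(\<Sum>i<K. \<Sum>j<length (S i). ?w i j) = 1"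
    using weighted[where h = "\<lambda>_. 1"] alpha_row lam_sum by simp
  ultimately have "measure_pmf.expectation (pserp_step K S lam alpha eps x) f
      = (\<Sum>i<K. \<Sum>j<length (S i). ?w i j * f (x(S i ! j := x (S i ! j) + 1)))"
    by (rule expectation_pserp_step_eq_sum)
  also have "\<dots> = (\<Sum>i<K. (\<Sum>j<length (S i). alpha i j * f (x(S i ! j := x (S i ! j) + 1)))
      + eps * (f (x(S i ! jmin S x i := x (S i ! jmin S x i) + 1))
               - f (x(S i ! jmax S x i := x (S i ! jmax S x i) + 1))))"
    by (intro sum.cong refl) (simp add: weighted)
  finally show ?thesis by (simp add: sum.distrib sum_distrib_left)
qed

lemma balanced_weights_average:
  fixes g :: "nat \<Rightarrow> real"
  assumes nodes: "\<And>i j. i < K \<Longrightarrow> j < length (S i) \<Longrightarrow> S i ! j < n"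
    and balance: "\<And>l. l < n \<Longrightarrow>
           (\<Sum>i<K. \<Sum>j<length (S i). alpha i j * (if l = S i ! j then 1 else 0)) = 1 / real n"
  shows "(\<Sum>i<K. \<Sum>j<length (S i). alpha i j * g (S i ! j)) = (\<Sum>l<n. g l) / real n"
proof -
  have "(\<Sum>i<K. \<Sum>j<length (S i). alpha i j * g (S i ! j))
      = (\<Sum>i<K. \<Sum>j<length (S i). \<Sum>l<n. g l * (alpha i j * (if l = S i ! j then 1 else 0)))"
    using nodes by (intro sum.cong refl) (simp add: if_distrib sum.delta cong: if_cong)
  also have "\<dots> = (\<Sum>l<n. g l * (\<Sum>i<K. \<Sum>j<length (S i). alpha i j * (if l = S i ! j then 1 else 0)))"
    by (simp add: sum_distrib_left sum.swap[of _ "{..<n}"])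
  also have "\<dots> = (\<Sum>l<n. g l / real n)"
    by (intro sum.cong refl) (simp add: balance)
  finally show ?thesis by (simp add: sum_divide_distrib)
qed

theorem lemma3p1:
  fixes n K :: nat and S :: "nat \<Rightarrow> nat list" and lam :: "nat \<Rightarrow> real"
    and alpha :: "nat \<Rightarrow> nat \<Rightarrow> real" and eps :: real and x :: "nat \<Rightarrow> nat"
  assumes S_distinct: "\<And>i. i < K \<Longrightarrow> distinct (S i)"
    and S_nonempty: "\<And>i. i < K \<Longrightarrow> S i \<noteq> []"
    and S_nodes: "\<And>i. i < K \<Longrightarrow> set (S i) \<subseteq> {..<n}"
    and S_cover: "(\<Union>i<K. set (S i)) = {..<n}"
    and lam_pos: "\<And>i. i < K \<Longrightarrow> lam i > 0"
    and lam_sum: "(\<Sum>i<K. lam i) = 1"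
    and alpha_pos: "\<And>i j. i < K \<Longrightarrow> j < length (S i) \<Longrightarrow> alpha i j > 0"
    and alpha_row: "\<And>i. i < K \<Longrightarrow> (\<Sum>j<length (S i). alpha i j) = lam i"
    and alpha_node: "\<And>l. l < n \<Longrightarrow>
           (\<Sum>i<K. \<Sum>j<length (S i). alpha i j * (if l = S i ! j then 1 else 0)) = 1 / real n"
    and eps_pos: "0 < eps"
    and eps_lt: "\<And>i j. i < K \<Longrightarrow> j < length (S i) \<Longrightarrow> eps < alpha i j"
  shows "measure_pmf.expectation (pserp_step K S lam alpha eps x)
            (\<lambda>y. potential n y - potential n x)
         = - 2 * eps * (\<Sum>i<K. real (x (S i ! jmax S x i)) - real (x (S i ! jmin S x i)))
           + 1 - 1 / real n"
proof -
  define c where "c = 1 - (2 * (\<Sum>l<n. real (x l)) + 1) / real n"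
  have K: "K > 0" using lam_sum by (cases K) auto
  have n: "n > 0" using S_nonempty[OF K] S_nodes[OF K] by (cases "S 0") auto
  have nodes: "\<And>i j. i < K \<Longrightarrow> j < length (S i) \<Longrightarrow> S i ! j < n"
    using S_nodes nth_mem by blast
  have incr: "potential n (x(v := Suc (x v))) = potential n x + c + 2 * real (x v)"
    if "v < n" for v
    using potential_increment[OF that, of x] by (simp add: c_def algebra_simps)
  let ?E = "measure_pmf.expectation (pserp_step K S lam alpha eps x) (\<lambda>y. potential n y - potential n x)"
  have "?E = (\<Sum>i<K. \<Sum>j<length (S i).
                alpha i j * (potential n (x(S i ! j := x (S i ! j) + 1)) - potential n x))
      + eps * (\<Sum>i<K. (potential n (x(S i ! jmin S x i := x (S i ! jmin S x i) + 1)) - potential n x)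
                     - (potential n (x(S i ! jmax S x i := x (S i ! jmax S x i) + 1)) - potential n x))"
    using eps_pos eps_lt
    by (intro expectation_pserp_step S_nonempty lam_pos lam_sum alpha_row) (auto intro: less_imp_le)
  also have "\<dots> = (\<Sum>i<K. \<Sum>j<length (S i). alpha i j * (c + 2 * real (x (S i ! j))))
      + eps * (\<Sum>i<K. (c + 2 * real (x (S i ! jmin S x i))) - (c + 2 * real (x (S i ! jmax S x i))))"
    using S_nonempty by (simp add: incr nodes jmin_less_length jmax_less_length cong: sum.cong_simp)
  also have "\<dots> = (\<Sum>i<K. \<Sum>j<length (S i). alpha i j * (c + 2 * real (x (S i ! j))))
      - 2 * eps * (\<Sum>i<K. real (x (S i ! jmax S x i)) - real (x (S i ! jmin S x i)))"
    by (simp add: sum_subtractf sum_distrib_left algebra_simps)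
  also have "(\<Sum>i<K. \<Sum>j<length (S i). alpha i j * (c + 2 * real (x (S i ! j))))
      = (\<Sum>l<n. c + 2 * real (x l)) / real n"
    using nodes alpha_node by (rule balanced_weights_average)
  also have "\<dots> = (real n * c + 2 * (\<Sum>l<n. real (x l))) / real n"
    by (simp add: sum.distrib sum_distrib_left)
  also have "\<dots> = 1 - 1 / real n"
    using n by (simp add: c_def field_simps)
  finally show ?thesis by simp
qed

end
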